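(* Let $S\in\Delta^1_n$ contain a pair of symmetric arcs $(u,v)$ and $(v,u)$, and let $S'$ be the sidigraph obtained from $S$ by deleting one of these two arcs. Then $E(S')<E(S)$.
   Context: A sidigraph is a digraph (no loops, at most one arc from $u$ to $v$) with a sign $\pm1$ on each arc; its eigenvalues are those of its adjacency matrix, whose $(i,j)$ entry is the sign of the arc from $v_i$ to $v_j$ if it exists and $0$ otherwise. The energy of a sidigraph with eigenvalues $z_1,\dots,z_n$ is $E(S)=\sum_{j=1}^n|\Re z_j|$. The sign of a directed cycle is the product of its arc signs. $\Delta^1_n$ is the class of sidigraphs on $n$ vertices whose underlying digraph is bipartite and in which every directed cycle of length $\equiv 0\pmod 4$ is negative and every directed cycle of length $\equiv 2\pmod 4$ is positive. *)

theory Defs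
  imports Complex_Main "HOL-Computational_Algebra.Polynomial" "Jordan_Normal_Form.Char_Poly"
begin

text \<open>A sidigraph on vertex set {0..<n} is identified with its adjacency matrix:
  an n x n integer matrix with zero diagonal (no loops) and entries in {-1,0,1};
  entry (i,j) is the sign of the arc from i to j, or 0 if there is no arc.\<close>

definition sidigraph :: "nat \<Rightarrow> int mat \<Rightarrow> bool" where
  "sidigraph n A \<longleftrightarrow> A \<in> carrier_mat n n \<and> (\<forall>i<n. A $$ (i,i) = 0) \<and>
     (\<forall>i<n. \<forall>j<n. A $$ (i,j) \<in> {-1,0,1})"

definition arc :: "int mat \<Rightarrow> nat \<Rightarrow> nat \<Rightarrow> bool" where
  "arc A i j \<longleftrightarrow> i < dim_row A \<and> j < dim_col A \<and> A $$ (i,j) \<noteq> 0"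

definition dir_cycle :: "int mat \<Rightarrow> nat list \<Rightarrow> bool" where
  "dir_cycle A vs \<longleftrightarrow> length vs \<ge> 2 \<and> distinct vs \<and>
     (\<forall>i<length vs. arc A (vs ! i) (vs ! ((i + 1) mod length vs)))"

definition cycle_sign :: "int mat \<Rightarrow> nat list \<Rightarrow> int" where
  "cycle_sign A vs = (\<Prod>i<length vs. A $$ (vs ! i, vs ! ((i + 1) mod length vs)))"

definition bipartite_underlying :: "nat \<Rightarrow> int mat \<Rightarrow> bool" where
  "bipartite_underlying n A \<longleftrightarrow> (\<exists>c :: nat \<Rightarrow> bool. \<forall>i<n. \<forall>j<n. arc A i j \<longrightarrow> c i \<noteq> c j)"

definition Delta1 :: "nat \<Rightarrow> int mat set" where
  "Delta1 n = {A. sidigraph n A \<and> bipartite_underlying n A \<and>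
     (\<forall>vs. dir_cycle A vs \<longrightarrow>
        (length vs mod 4 = 0 \<longrightarrow> cycle_sign A vs = -1) \<and>
        (length vs mod 4 = 2 \<longrightarrow> cycle_sign A vs = 1))}"

definition eigenvalues_ms :: "int mat \<Rightarrow> complex multiset" where
  "eigenvalues_ms A = proots (char_poly (map_mat complex_of_int A))"

definition energy :: "int mat \<Rightarrow> real" where
  "energy A = (\<Sum>z\<in>#eigenvalues_ms A. \<bar>Re z\<bar>)"

definition delete_arc :: "int mat \<Rightarrow> nat \<Rightarrow> nat \<Rightarrow> int mat" where
  "delete_arc A u v = mat (dim_row A) (dim_col A) (\<lambda>(i,j). if (i,j) = (u,v) then 0 else A $$ (i,j))"

end

theory Submission
  imports Defs "HOL-Real_Asymp.Real_Asymp" "HOL-Combinatorics.Cycles"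
begin

text \<open>Expanding \<open>det (yI - A)\<close> over permutations, only the linear subdigraphs (vertex-disjoint
  unions of directed cycles) survive. In a sidigraph of class \<open>\<Delta>\<^sup>1\<close> every directed cycle has even
  length \<open>2m\<close> and sign \<open>-(-1)\<^sup>m\<close>, which makes the contribution of each linear subdigraph with
  \<open>k\<close> uncovered vertices at \<open>y = \<i>x\<close> exactly \<open>\<i>\<^sup>n x\<^sup>k\<close>. Hence \<open>\<chi>\<^sub>A(\<i>x) = \<i>\<^sup>n S\<^sub>A(x)\<close> for a
  polynomial \<open>S\<^sub>A\<close> with nonnegative coefficients, and deleting the arc \<open>(u,v)\<close> strictly
  decreases \<open>S\<^sub>A(x)\<close> for \<open>x > 0\<close>: the 2-cycle on \<open>u, v\<close> is lost.

  The energy is controlled by \<open>S\<^sub>A\<close> through a Coulson-type formula: for every eigenvalue \<open>z\<close>,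
  \<open>\<integral>\<^sub>0\<^sup>\<infinity> (ln \<bar>x\<^sup>2 + z\<^sup>2\<bar> - 2 ln x) dx = \<pi> \<bar>Re z\<bar>\<close>, and the product of the \<open>\<bar>x\<^sup>2 + z\<^sup>2\<bar>\<close> over
  all eigenvalues is \<open>S\<^sub>A(x)\<^sup>2\<close>. So \<open>\<pi> E(A)\<close> is the total increase of a function with
  derivative \<open>2 ln S\<^sub>A(x) - 2n ln x\<close>; comparing these derivatives for \<open>A\<close> and for the
  sidigraph with the arc deleted gives the strict inequality. The integrals are never formed:
  we use explicit primitives and their limits at \<open>0\<close> and \<open>\<infinity>\<close>.\<close>


section \<open>Directed cycles and linear subdigraphs in \<open>\<Delta>\<^sup>1\<close>\<close>

lemma sign_cycle_of_list:
  "distinct cs \<Longrightarrow> sign (cycle_of_list cs) = (-1) ^ (length cs - 1)"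
proof (induction cs rule: cycle_of_list.induct)
  case (1 i j cs)
  then have "i \<noteq> j" by auto
  have "sign (cycle_of_list (i # j # cs)) = sign (transpose i j) * sign (cycle_of_list (j # cs))"
    by (simp add: sign_compose permutation_swap_id permutation_of_cycle)
  also have "\<dots> = - ((-1) ^ length cs)"
    using 1 \<open>i \<noteq> j\<close> by (simp add: sign_swap_id)
  finally show ?case by (simp del: cycle_of_list.simps)
qed simp_all

lemma sign_even_cycle_comp:
  assumes "distinct c" and "even (length c)" and "length c \<ge> 2" and "permutation q"
  shows "sign (cycle_of_list c \<circ> q) = - sign q"
proof -
  have "odd (length c - 1)"
    using assms(2,3) by presburger
  then show ?thesis
    using assms(1,4) by (simp add: sign_compose permutation_of_cycle sign_cycle_of_list)
qed

lemma support_nth_Suc: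
  assumes "permutation p" and "k < length (support p s)"
  shows "p (support p s ! k) = support p s ! (Suc k mod length (support p s))"
proof (cases "Suc k < length (support p s)")
  case True
  then show ?thesis by simp
next
  case False
  then have "Suc k = least_power p s"
    using assms(2) by simp
  moreover have "p (support p s ! k) = (p ^^ Suc k) s"
    using assms(2) by simp
  ultimately show ?thesis
    using least_power_of_permutation(1)[OF assms(1)] assms(2) by simp
qed

lemma rotation_moves:
  assumes "distinct c" and "length c \<ge> 2"
    and succ: "\<And>k. k < length c \<Longrightarrow> p (c ! k) = c ! (Suc k mod length c)" and "x \<in> set c"
  shows "p x \<noteq> x"
proof -
  obtain k where k: "k < length c" "x = c ! k"
    using assms(4) by (auto simp: in_set_conv_nth)
  have "Suc k mod length c \<noteq> k"
    using k(1) assms(2) by (cases "Suc k = length c") auto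
  moreover have "Suc k mod length c < length c"
    using k(1) by (metis mod_less_divisor not_less0 gr0I)
  ultimately show ?thesis
    using succ[OF k(1)] k assms(1) by (simp add: nth_eq_iff_index_eq)
qed

lemma permutes_eq_cycle_comp_restrict:
  assumes p: "p permutes S" and fin: "finite S"
  shows "p = cycle_of_list (support p s) \<circ> (\<lambda>y. if y \<in> S - set (support p s) then p y else y)"
    (is "_ = cycle_of_list ?c \<circ> ?q")
proof
  have perm: "permutation p"
    using p fin permutation_permutes by blast
  fix a
  consider "a \<in> S - set ?c" | "a \<in> set ?c" | "a \<notin> S" "a \<notin> set ?c" by blast
  then show "p a = (cycle_of_list ?c \<circ> ?q) a"
  proof cases
    case 1
    have "(p ^^ 1) a \<in> set (support p a)"
      unfolding support_set[OF perm] by blast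
    with 1 have "p a \<notin> set ?c"
      using disjoint_support'[OF perm, of a s] by auto
    with 1 show ?thesis
      using id_outside_supp[of _ ?c] by simp
  next
    case 2
    then show ?thesis
      using cycle_restrict[OF perm] by simp
  next
    case 3
    then show ?thesis
      using id_outside_supp[OF 3(2)] permutes_not_in[OF p] by simp
  qed
qed

lemma permutes_split_off_cycle:
  assumes p: "p permutes S" and fin: "finite S" and s: "s \<in> S" "p s \<noteq> s"
  obtains c q where "distinct c" "length c \<ge> 2" "s \<in> set c" "set c \<subseteq> S"
    and "\<And>k. k < length c \<Longrightarrow> p (c ! k) = c ! (Suc k mod length c)"
    and "q permutes S - set c" and "\<And>x. x \<in> S - set c \<Longrightarrow> q x = p x"
    and "p = cycle_of_list c \<circ> q"
proof
  have perm: "permutation p"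
    using p fin permutation_permutes by blast
  show "distinct (support p s)"
    by (rule cycle_of_permutation[OF perm])
  show len: "length (support p s) \<ge> 2"
    using least_power_gt_one[OF perm s(2)] by simp
  then show "s \<in> set (support p s)"
    by (auto simp: image_iff intro!: bexI[of _ 0])
  show "set (support p s) \<subseteq> S"
    using permutes_in_image[OF permutes_funpow[OF p]] s(1) by auto
  show "p (support p s ! k) = support p s ! (Suc k mod length (support p s))"
    if "k < length (support p s)" for k
    by (rule support_nth_Suc[OF perm that])
  show "(\<lambda>y. if y \<in> S - set (support p s) then p y else y) permutes S - set (support p s)"
    by (rule semidecomposition[OF p fin])
  show "p = cycle_of_list (support p s) \<circ> (\<lambda>y. if y \<in> S - set (support p s) then p y else y)"
    by (rule permutes_eq_cycle_comp_restrict[OF p fin])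
qed simp

lemma moved_points_split_off_cycle:
  fixes f :: "nat \<Rightarrow> nat \<Rightarrow> 'a :: comm_monoid_mult"
  assumes "finite S" and "distinct c" and "set c \<subseteq> S" and moved: "\<And>x. x \<in> set c \<Longrightarrow> p x \<noteq> x"
    and q: "\<And>x. x \<in> S - set c \<Longrightarrow> q x = p x"
  shows "(\<Prod>i\<in>{i\<in>S. p i \<noteq> i}. f i (p i)) =
      (\<Prod>i\<in>set c. f i (p i)) * (\<Prod>i\<in>{i\<in>S - set c. q i \<noteq> i}. f i (q i))"
    and "card {i\<in>S. p i \<noteq> i} = length c + card {i\<in>S - set c. q i \<noteq> i}"
proof -
  have split: "{i\<in>S. p i \<noteq> i} = set c \<union> {i\<in>S - set c. q i \<noteq> i}"
    using assms(3) moved q by auto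
  show "(\<Prod>i\<in>{i\<in>S. p i \<noteq> i}. f i (p i)) =
      (\<Prod>i\<in>set c. f i (p i)) * (\<Prod>i\<in>{i\<in>S - set c. q i \<noteq> i}. f i (q i))"
    unfolding split using assms(1) q by (subst prod.union_disjoint) (auto intro!: prod.cong)
  show "card {i\<in>S. p i \<noteq> i} = length c + card {i\<in>S - set c. q i \<noteq> i}"
    unfolding split using assms(1,2) by (subst card_Un_disjoint) (auto simp: distinct_card)
qed

lemma prod_neg_entries_cycle:
  assumes "distinct c" and succ: "\<And>k. k < length c \<Longrightarrow> p (c ! k) = c ! (Suc k mod length c)"
  shows "(\<Prod>i\<in>set c. - A $$ (i, p i)) = (-1) ^ length c * cycle_sign A c"
proof -
  have "(\<Prod>i\<in>set c. - A $$ (i, p i)) = (\<Prod>k<length c. - A $$ (c ! k, p (c ! k)))"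
    using assms(1) by (simp add: prod.distinct_set_conv_list prod.list_conv_set_nth atLeast0LessThan)
  also have "\<dots> = (\<Prod>k<length c. (-1) * A $$ (c ! k, c ! (Suc k mod length c)))"
    by (rule prod.cong) (simp_all add: succ)
  also have "\<dots> = (-1) ^ length c * cycle_sign A c"
    by (subst prod.distrib) (simp add: cycle_sign_def)
  finally show ?thesis .
qed

lemma dir_cycle_length_even:
  assumes "bipartite_underlying n A" and "dir_cycle A vs" and "set vs \<subseteq> {0..<n}"
  shows "even (length vs)"
proof -
  obtain col :: "nat \<Rightarrow> bool" where col: "\<And>i j. i < n \<Longrightarrow> j < n \<Longrightarrow> arc A i j \<Longrightarrow> col i \<noteq> col j"
    using assms(1) unfolding bipartite_underlying_def by blast
  define L where "L = length vs"
  have L: "L \<ge> 2" and arcs: "\<And>i. i < L \<Longrightarrow> arc A (vs ! i) (vs ! (Suc i mod L))"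
    using assms(2) unfolding dir_cycle_def L_def by auto
  have vs_lt: "vs ! i < n" if "i < L" for i
    using assms(3) nth_mem that unfolding L_def by fastforce
  have flip: "col (vs ! (Suc i mod L)) \<longleftrightarrow> \<not> col (vs ! i)" if "i < L" for i
  proof -
    have "Suc i mod L < L" using L by simp
    then show ?thesis using col[OF vs_lt[OF that] vs_lt arcs[OF that]] by auto
  qed
  have alternate: "col (vs ! k) \<longleftrightarrow> (col (vs ! 0) \<longleftrightarrow> even k)" if "k < L" for k
    using that
  proof (induction k)
    case (Suc k)
    then show ?case using flip[of k] by simp
  qed simp
  show ?thesis
    using flip[of "L - 1"] alternate[of "L - 1"] L unfolding L_def[symmetric] by auto
qed

lemma dir_cycle_of_rotation:
  assumes "A \<in> carrier_mat n n" and "set c \<subseteq> {0..<n}" and "distinct c" and "length c \<ge> 2"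
    and succ: "\<And>k. k < length c \<Longrightarrow> p (c ! k) = c ! (Suc k mod length c)"
    and arcs: "\<And>i. i \<in> set c \<Longrightarrow> A $$ (i, p i) \<noteq> 0"
  shows "dir_cycle A c"
  unfolding dir_cycle_def
proof (intro conjI allI impI)
  fix k assume k: "k < length c"
  have "Suc k mod length c < length c"
    using k by (metis mod_less_divisor not_less0 gr0I)
  then have "c ! k < n" "c ! (Suc k mod length c) < n"
    using assms(2) k nth_mem by (metis atLeastLessThan_iff subsetD)+
  then show "arc A (c ! k) (c ! ((k + 1) mod length c))"
    using assms(1) arcs[OF nth_mem[OF k]] succ[OF k] unfolding arc_def by simp
qed (use assms in auto)

text \<open>The outer minus sign is the sign of the cycle, a permutation of even length.\<close>

lemma Delta1_cycle_factor:
  assumes A: "A \<in> Delta1 n" and "set c \<subseteq> {0..<n}" and "distinct c" and "length c \<ge> 2"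
    and succ: "\<And>k. k < length c \<Longrightarrow> p (c ! k) = c ! (Suc k mod length c)"
    and arcs: "\<And>i. i \<in> set c \<Longrightarrow> A $$ (i, p i) \<noteq> 0"
  shows "even (length c)" and "- (\<Prod>i\<in>set c. - A $$ (i, p i)) = (-1) ^ (length c div 2)"
proof -
  have "A \<in> carrier_mat n n" and bipartite: "bipartite_underlying n A"
    using A by (simp_all add: Delta1_def sidigraph_def)
  then have cycle: "dir_cycle A c"
    by (intro dir_cycle_of_rotation[where p = p, OF _ assms(2-4)]) (simp_all add: succ arcs)
  then have sign: "(length c mod 4 = 0 \<longrightarrow> cycle_sign A c = -1) \<and>
      (length c mod 4 = 2 \<longrightarrow> cycle_sign A c = 1)"
    using A by (simp add: Delta1_def)
  show even: "even (length c)"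
    by (rule dir_cycle_length_even[OF bipartite cycle assms(2)])
  then have "length c mod 4 = 0 \<and> even (length c div 2) \<or> length c mod 4 = 2 \<and> odd (length c div 2)"
    by presburger
  then have "cycle_sign A c = - ((-1) ^ (length c div 2))"
    using sign by auto
  moreover have "(\<Prod>i\<in>set c. - A $$ (i, p i)) = (-1) ^ length c * cycle_sign A c"
    using prod_neg_entries_cycle[OF assms(3) succ] by simp
  ultimately show "- (\<Prod>i\<in>set c. - A $$ (i, p i)) = (-1) ^ (length c div 2)"
    using even by simp
qed

lemma Delta1_split_off_cycle_weight:
  assumes A: "A \<in> Delta1 n" and "S \<subseteq> {0..<n}" and p: "p permutes S"
    and supported: "\<forall>i\<in>S. p i \<noteq> i \<longrightarrow> A $$ (i, p i) \<noteq> 0" and s: "s \<in> S" "p s \<noteq> s"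
  obtains T q m where "T \<subset> S" and "q permutes T" and "\<forall>i\<in>T. q i \<noteq> i \<longrightarrow> A $$ (i, q i) \<noteq> 0"
    and "card {i\<in>S. p i \<noteq> i} = 2 * m + card {i\<in>T. q i \<noteq> i}"
    and "sign p * (\<Prod>i\<in>{i\<in>S. p i \<noteq> i}. - A $$ (i, p i)) =
      (-1) ^ m * (sign q * (\<Prod>i\<in>{i\<in>T. q i \<noteq> i}. - A $$ (i, q i)))"
proof -
  have fin: "finite S"
    using assms(2) finite_subset by blast
  obtain c q where c: "distinct c" "length c \<ge> 2" "s \<in> set c" "set c \<subseteq> S"
    and succ: "\<And>k. k < length c \<Longrightarrow> p (c ! k) = c ! (Suc k mod length c)"
    and q: "q permutes S - set c" "\<And>x. x \<in> S - set c \<Longrightarrow> q x = p x"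
    and p_eq: "p = cycle_of_list c \<circ> q"
    using permutes_split_off_cycle[OF p fin s] by metis
  have moved_c: "p x \<noteq> x" if "x \<in> set c" for x
    by (rule rotation_moves[OF c(1,2) _ that]) (rule succ)
  note split = moved_points_split_off_cycle[OF fin c(1,4) moved_c q(2)]
  have c_n: "set c \<subseteq> {0..<n}"
    using assms(2) c(4) by blast
  have arcs: "A $$ (i, p i) \<noteq> 0" if "i \<in> set c" for i
    using supported moved_c c(4) that by blast
  have cycle: "even (length c)" "- (\<Prod>i\<in>set c. - A $$ (i, p i)) = (-1) ^ (length c div 2)"
    using Delta1_cycle_factor[OF A c_n c(1,2) succ arcs] by simp_all
  have "permutation q"
    using q(1) fin by (auto simp: permutation_permutes)
  then have sign_p: "sign p = - sign q"
    unfolding p_eq using c(1) cycle(1) c(2) by (intro sign_even_cycle_comp)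
  have "(\<Prod>i\<in>{i\<in>S. p i \<noteq> i}. - A $$ (i, p i)) =
      (\<Prod>i\<in>set c. - A $$ (i, p i)) * (\<Prod>i\<in>{i\<in>S - set c. q i \<noteq> i}. - A $$ (i, q i))"
    by (rule split(1))
  then have "sign p * (\<Prod>i\<in>{i\<in>S. p i \<noteq> i}. - A $$ (i, p i)) =
      (-1) ^ (length c div 2) * (sign q * (\<Prod>i\<in>{i\<in>S - set c. q i \<noteq> i}. - A $$ (i, q i)))"
    unfolding sign_p cycle(2)[symmetric] by (simp add: mult_ac)
  moreover have "card {i\<in>S. p i \<noteq> i} = 2 * (length c div 2) + card {i\<in>S - set c. q i \<noteq> i}"
    using split(2) cycle(1) by simp
  moreover have "S - set c \<subset> S"
    using c(3) s(1) by blast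
  moreover have "\<forall>i\<in>S - set c. q i \<noteq> i \<longrightarrow> A $$ (i, q i) \<noteq> 0"
    using supported q(2) by simp
  ultimately show ?thesis
    using that q(1) by blast
qed

lemma Delta1_linear_subdigraph_weight:
  assumes A: "A \<in> Delta1 n" and "S \<subseteq> {0..<n}" and "p permutes S"
    and "\<forall>i\<in>S. p i \<noteq> i \<longrightarrow> A $$ (i, p i) \<noteq> 0"
  shows "even (card {i\<in>S. p i \<noteq> i}) \<and>
    sign p * (\<Prod>i\<in>{i\<in>S. p i \<noteq> i}. - A $$ (i, p i)) = (-1) ^ (card {i\<in>S. p i \<noteq> i} div 2)"
  using assms(2-)
proof (induction "card S" arbitrary: S p rule: less_induct)
  case less
  show ?case
  proof (cases "\<forall>i\<in>S. p i = i")
    case True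
    then have "p = id" and "{i\<in>S. p i \<noteq> i} = {}"
      using permutes_not_in[OF less.prems(2)] by fastforce+
    then show ?thesis by simp
  next
    case False
    then obtain s where "s \<in> S" "p s \<noteq> s" by auto
    with A less.prems obtain T q m where T: "T \<subset> S" "q permutes T"
      "\<forall>i\<in>T. q i \<noteq> i \<longrightarrow> A $$ (i, q i) \<noteq> 0"
      and card: "card {i\<in>S. p i \<noteq> i} = 2 * m + card {i\<in>T. q i \<noteq> i}"
      and weight: "sign p * (\<Prod>i\<in>{i\<in>S. p i \<noteq> i}. - A $$ (i, p i)) =
        (-1) ^ m * (sign q * (\<Prod>i\<in>{i\<in>T. q i \<noteq> i}. - A $$ (i, q i)))"
      by (rule Delta1_split_off_cycle_weight)
    have "card T < card S"
      using T(1) less.prems(1) finite_subset by (intro psubset_card_mono) auto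
    then have "even (card {i\<in>T. q i \<noteq> i}) \<and>
        sign q * (\<Prod>i\<in>{i\<in>T. q i \<noteq> i}. - A $$ (i, q i)) = (-1) ^ (card {i\<in>T. q i \<noteq> i} div 2)"
      using less.hyps T less.prems(1) by blast
    then show ?thesis
      unfolding card weight by (simp add: power_add)
  qed
qed


lemma arc_delete_arcD:
  assumes "arc (delete_arc A u v) i j"
  shows "arc A i j" and "delete_arc A u v $$ (i, j) = A $$ (i, j)"
  using assms by (auto simp: arc_def delete_arc_def split: if_splits)

lemma delete_arc_carrier: "A \<in> carrier_mat n n \<Longrightarrow> delete_arc A u v \<in> carrier_mat n n"
  by (simp add: delete_arc_def)

lemma delete_arc_index:
  "A \<in> carrier_mat n n \<Longrightarrow> i < n \<Longrightarrow> j < n \<Longrightarrow>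
    delete_arc A u v $$ (i, j) = (if (i, j) = (u, v) then 0 else A $$ (i, j))"
  by (simp add: delete_arc_def)

lemma sidigraph_delete_arc:
  assumes "sidigraph n A"
  shows "sidigraph n (delete_arc A u v)"
  unfolding sidigraph_def
proof (intro conjI allI impI)
  have A_n: "A \<in> carrier_mat n n"
    using assms by (simp add: sidigraph_def)
  then show "delete_arc A u v \<in> carrier_mat n n"
    by (rule delete_arc_carrier)
  fix i assume i: "i < n"
  show "delete_arc A u v $$ (i, i) = 0"
    using assms i delete_arc_index[OF A_n i i] by (simp add: sidigraph_def)
  fix j assume j: "j < n"
  show "delete_arc A u v $$ (i, j) \<in> {-1, 0, 1}"
    using assms i j delete_arc_index[OF A_n i j] by (simp add: sidigraph_def)
qed

lemma bipartite_underlying_delete_arc: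
  assumes "bipartite_underlying n A"
  shows "bipartite_underlying n (delete_arc A u v)"
proof -
  obtain col :: "nat \<Rightarrow> bool" where "\<forall>i<n. \<forall>j<n. arc A i j \<longrightarrow> col i \<noteq> col j"
    using assms unfolding bipartite_underlying_def by blast
  then have "\<forall>i<n. \<forall>j<n. arc (delete_arc A u v) i j \<longrightarrow> col i \<noteq> col j"
    using arc_delete_arcD(1)[of A u v] by blast
  then show ?thesis
    unfolding bipartite_underlying_def by blast
qed

lemma dir_cycle_delete_arcD:
  assumes "dir_cycle (delete_arc A u v) vs"
  shows "dir_cycle A vs" and "cycle_sign (delete_arc A u v) vs = cycle_sign A vs"
proof -
  show "dir_cycle A vs"
    using assms arc_delete_arcD(1)[of A u v] unfolding dir_cycle_def by blast
  show "cycle_sign (delete_arc A u v) vs = cycle_sign A vs"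
    unfolding cycle_sign_def
    by (rule prod.cong[OF refl]) (use assms arc_delete_arcD(2)[of A u v] in \<open>auto simp: dir_cycle_def\<close>)
qed

lemma delete_arc_Delta1:
  assumes A: "A \<in> Delta1 n"
  shows "delete_arc A u v \<in> Delta1 n"
proof -
  have "sidigraph n (delete_arc A u v)" and "bipartite_underlying n (delete_arc A u v)"
    using A sidigraph_delete_arc bipartite_underlying_delete_arc by (simp_all add: Delta1_def)
  moreover have "(length vs mod 4 = 0 \<longrightarrow> cycle_sign (delete_arc A u v) vs = -1) \<and>
      (length vs mod 4 = 2 \<longrightarrow> cycle_sign (delete_arc A u v) vs = 1)"
    if "dir_cycle (delete_arc A u v) vs" for vs
    using A dir_cycle_delete_arcD[OF that] by (simp add: Delta1_def)
  ultimately show ?thesis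
    unfolding Delta1_def by blast
qed


section \<open>The characteristic polynomial on the imaginary axis\<close>

lemma poly_char_poly_zero_diagonal:
  fixes B :: "'a :: field mat"
  assumes B: "B \<in> carrier_mat n n" and diag: "\<And>i. i < n \<Longrightarrow> B $$ (i, i) = 0"
  shows "poly (char_poly B) y = (\<Sum>p | p permutes {0..<n}.
    signof p * (\<Prod>i\<in>{i\<in>{0..<n}. p i \<noteq> i}. - B $$ (i, p i)) * y ^ card {i\<in>{0..<n}. p i = i})"
proof -
  have "poly (char_poly B) y = det (- char_matrix B y)"
    by (rule char_poly_matrix[OF B])
  also have "\<dots> = (\<Sum>p | p permutes {0..<n}. signof p * (\<Prod>i=0..<n. (- char_matrix B y) $$ (i, p i)))"
    by (rule det_def') (use B in simp)
  also have "\<dots> = (\<Sum>p | p permutes {0..<n}.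
      signof p * (\<Prod>i\<in>{i\<in>{0..<n}. p i \<noteq> i}. - B $$ (i, p i)) * y ^ card {i\<in>{0..<n}. p i = i})"
  proof (rule sum.cong[OF refl])
    fix p assume "p \<in> {p. p permutes {0..<n}}"
    then have p_lt: "p i < n" if "i < n" for i
      using that by (simp add: permutes_in_image)
    have "(\<Prod>i=0..<n. (- char_matrix B y) $$ (i, p i)) =
        (\<Prod>i=0..<n. if p i = i then y else - B $$ (i, p i))"
      by (rule prod.cong) (use B diag p_lt in \<open>auto simp: char_matrix_def\<close>)
    also have "\<dots> = y ^ card {i\<in>{0..<n}. p i = i} * (\<Prod>i\<in>{i\<in>{0..<n}. p i \<noteq> i}. - B $$ (i, p i))"
      by (simp add: prod.If_cases Int_def)
    finally show "signof p * (\<Prod>i=0..<n. (- char_matrix B y) $$ (i, p i)) =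
        signof p * (\<Prod>i\<in>{i\<in>{0..<n}. p i \<noteq> i}. - B $$ (i, p i)) * y ^ card {i\<in>{0..<n}. p i = i}"
      by (simp add: mult_ac)
  qed
  finally show ?thesis .
qed

text \<open>A permutation with an arc \<open>i \<rightarrow> p i\<close> at every moved point \<open>i\<close> is a linear subdigraph:
  a vertex-disjoint union of directed cycles (2-cycles included), whose fixed points are the
  uncovered vertices.\<close>

definition linear_subdigraphs :: "int mat \<Rightarrow> nat \<Rightarrow> (nat \<Rightarrow> nat) set" where
  "linear_subdigraphs A n = {p. p permutes {0..<n} \<and> (\<forall>i<n. p i \<noteq> i \<longrightarrow> A $$ (i, p i) \<noteq> 0)}"

definition linear_subdigraph_poly :: "int mat \<Rightarrow> nat \<Rightarrow> real \<Rightarrow> real" where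
  "linear_subdigraph_poly A n x = (\<Sum>p\<in>linear_subdigraphs A n. x ^ card {i\<in>{0..<n}. p i = i})"

lemma finite_linear_subdigraphs: "finite (linear_subdigraphs A n)"
  by (rule finite_subset[OF _ finite_permutations[of "{0..<n}"]]) (auto simp: linear_subdigraphs_def)

lemma card_fixed_plus_moved: "card {i\<in>{0..<n}. p i = i} + card {i\<in>{0..<n}. p i \<noteq> i} = n"
proof -
  have "card {0..<n} = card ({0..<n} \<inter> {i. p i = i}) + card ({0..<n} - {i. p i = i})"
    by (rule card_Int_Diff) simp
  then show ?thesis
    by (simp add: Int_def set_diff_eq)
qed

lemma Delta1_linear_subdigraph_moved_even:
  assumes "A \<in> Delta1 n" and "p \<in> linear_subdigraphs A n"
  shows "even (card {i\<in>{0..<n}. p i \<noteq> i})"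
  using Delta1_linear_subdigraph_weight[OF assms(1), of "{0..<n}" p] assms(2)
  by (simp add: linear_subdigraphs_def)

lemma Delta1_permutation_term_imaginary:
  assumes A: "A \<in> Delta1 n" and p: "p permutes {0..<n}"
  shows "signof p * (\<Prod>i\<in>{i\<in>{0..<n}. p i \<noteq> i}. - map_mat complex_of_int A $$ (i, p i)) *
      (\<i> * of_real x) ^ card {i\<in>{0..<n}. p i = i} =
    (if p \<in> linear_subdigraphs A n then \<i> ^ n * of_real (x ^ card {i\<in>{0..<n}. p i = i}) else 0)"
proof -
  define fixed where "fixed = card {i\<in>{0..<n}. p i = i}"
  define moved where "moved = card {i\<in>{0..<n}. p i \<noteq> i}"
  have A_n: "A \<in> carrier_mat n n"
    using A by (simp add: Delta1_def sidigraph_def)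
  have "p i < n" if "i < n" for i
    using p that by (simp add: permutes_in_image)
  then have prod_int: "(\<Prod>i\<in>{i\<in>{0..<n}. p i \<noteq> i}. - map_mat complex_of_int A $$ (i, p i)) =
      of_int (\<Prod>i\<in>{i\<in>{0..<n}. p i \<noteq> i}. - A $$ (i, p i))"
    using A_n by (simp add: of_int_prod)
  show ?thesis
  proof (cases "p \<in> linear_subdigraphs A n")
    case True
    have weight: "sign p * (\<Prod>i\<in>{i\<in>{0..<n}. p i \<noteq> i}. - A $$ (i, p i)) = (-1) ^ (moved div 2)"
      and even: "even moved"
      using Delta1_linear_subdigraph_weight[OF A, of "{0..<n}" p] True
      by (auto simp: linear_subdigraphs_def moved_def)
    have "signof p * (\<Prod>i\<in>{i\<in>{0..<n}. p i \<noteq> i}. - map_mat complex_of_int A $$ (i, p i)) =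
        (-1) ^ (moved div 2)"
      unfolding prod_int of_int_mult[symmetric] weight by simp
    also have "\<dots> = \<i> ^ (2 * (moved div 2))"
      by (simp add: power_mult)
    also have "\<dots> = \<i> ^ moved"
      using even by simp
    finally have "signof p * (\<Prod>i\<in>{i\<in>{0..<n}. p i \<noteq> i}. - map_mat complex_of_int A $$ (i, p i)) *
        (\<i> * of_real x) ^ fixed = \<i> ^ (moved + fixed) * of_real (x ^ fixed)"
      by (simp add: power_mult_distrib power_add mult.assoc)
    also have "moved + fixed = n"
      using card_fixed_plus_moved[of n p] by (simp add: fixed_def moved_def)
    finally show ?thesis
      using True by (simp add: fixed_def)
  next
    case False
    then obtain i where "i < n" "p i \<noteq> i" "A $$ (i, p i) = 0"
      using p by (auto simp: linear_subdigraphs_def)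
    then have "(\<Prod>i\<in>{i\<in>{0..<n}. p i \<noteq> i}. - A $$ (i, p i)) = 0"
      by (intro prod_zero) auto
    with False show ?thesis
      using prod_int by simp
  qed
qed

lemma Delta1_char_poly_imaginary:
  assumes A: "A \<in> Delta1 n"
  shows "poly (char_poly (map_mat complex_of_int A)) (\<i> * of_real x) =
    \<i> ^ n * of_real (linear_subdigraph_poly A n x)"
proof -
  let ?fixed = "\<lambda>p. card {i\<in>{0..<n}. p i = i}"
  have A_n: "A \<in> carrier_mat n n" and diag: "\<And>i. i < n \<Longrightarrow> A $$ (i, i) = 0"
    using A by (auto simp: Delta1_def sidigraph_def)
  have restrict: "{p. p permutes {0..<n}} \<inter> linear_subdigraphs A n = linear_subdigraphs A n"
    by (auto simp: linear_subdigraphs_def)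
  have "poly (char_poly (map_mat complex_of_int A)) (\<i> * of_real x) = (\<Sum>p | p permutes {0..<n}.
      signof p * (\<Prod>i\<in>{i\<in>{0..<n}. p i \<noteq> i}. - map_mat complex_of_int A $$ (i, p i)) *
      (\<i> * of_real x) ^ ?fixed p)"
    by (rule poly_char_poly_zero_diagonal) (use A_n diag in auto)
  also have "\<dots> = (\<Sum>p | p permutes {0..<n}.
      if p \<in> linear_subdigraphs A n then \<i> ^ n * of_real (x ^ ?fixed p) else 0)"
    by (rule sum.cong[OF refl]) (rule Delta1_permutation_term_imaginary[OF A], simp)
  also have "\<dots> = (\<Sum>p\<in>{p. p permutes {0..<n}} \<inter> linear_subdigraphs A n. \<i> ^ n * of_real (x ^ ?fixed p))"
    by (rule sum.inter_restrict[symmetric]) (simp add: finite_permutations)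
  also have "\<dots> = \<i> ^ n * of_real (linear_subdigraph_poly A n x)"
    unfolding restrict by (simp add: linear_subdigraph_poly_def sum_distrib_left)
  finally show ?thesis .
qed

lemma linear_subdigraph_poly_minus:
  assumes A: "A \<in> Delta1 n"
  shows "linear_subdigraph_poly A n (- x) = (-1) ^ n * linear_subdigraph_poly A n x"
proof -
  have "(- x) ^ card {i\<in>{0..<n}. p i = i} = (-1) ^ n * x ^ card {i\<in>{0..<n}. p i = i}"
    if p: "p \<in> linear_subdigraphs A n" for p
  proof -
    have "(-1 :: real) ^ n = (-1) ^ (card {i\<in>{0..<n}. p i = i} + card {i\<in>{0..<n}. p i \<noteq> i})"
      by (simp only: card_fixed_plus_moved)
    also have "\<dots> = (-1) ^ card {i\<in>{0..<n}. p i = i}"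
      using Delta1_linear_subdigraph_moved_even[OF A p] by (simp add: power_add)
    finally show ?thesis
      by (simp add: power_minus[of x])
  qed
  then show ?thesis
    unfolding linear_subdigraph_poly_def sum_distrib_left by (rule sum.cong[OF refl])
qed

lemma linear_subdigraph_poly_pos:
  assumes "x > 0"
  shows "0 < linear_subdigraph_poly A n x"
proof -
  have "id \<in> linear_subdigraphs A n"
    by (simp add: linear_subdigraphs_def permutes_id)
  then show ?thesis
    unfolding linear_subdigraph_poly_def using assms finite_linear_subdigraphs
    by (intro sum_pos2) auto
qed

lemma linear_subdigraph_poly_delete_arc_less:
  assumes A: "A \<in> carrier_mat n n" and uv: "u < n" "v < n" "u \<noteq> v"
    and arcs: "A $$ (u, v) \<noteq> 0" "A $$ (v, u) \<noteq> 0" and x: "x > 0"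
  shows "linear_subdigraph_poly (delete_arc A u v) n x < linear_subdigraph_poly A n x"
proof -
  let ?B = "delete_arc A u v"
  let ?f = "\<lambda>p. x ^ card {i\<in>{0..<n}. p i = i}"
  note B_index = delete_arc_index[OF A]
  have subset: "linear_subdigraphs ?B n \<subseteq> linear_subdigraphs A n"
  proof
    fix p assume "p \<in> linear_subdigraphs ?B n"
    then have "p permutes {0..<n}" and "\<forall>i<n. p i \<noteq> i \<longrightarrow> ?B $$ (i, p i) \<noteq> 0"
      by (simp_all add: linear_subdigraphs_def)
    moreover have "p i < n" if "i < n" for i
      using \<open>p permutes {0..<n}\<close> that by (simp add: permutes_in_image)
    ultimately show "p \<in> linear_subdigraphs A n"
      using B_index by (auto simp: linear_subdigraphs_def split: if_splits)
  qed
  have "transpose u v \<in> linear_subdigraphs A n - linear_subdigraphs ?B n"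
    using uv arcs B_index[of u v]
    by (auto simp: linear_subdigraphs_def permutes_swap_id transpose_def)
  then have "0 < sum ?f (linear_subdigraphs A n - linear_subdigraphs ?B n)"
    using x finite_linear_subdigraphs by (intro sum_pos2) auto
  moreover have "sum ?f (linear_subdigraphs A n) =
      sum ?f (linear_subdigraphs A n - linear_subdigraphs ?B n) + sum ?f (linear_subdigraphs ?B n)"
    by (rule sum.subset_diff[OF subset finite_linear_subdigraphs])
  ultimately show ?thesis
    unfolding linear_subdigraph_poly_def by linarith
qed


section \<open>A Coulson-type formula for the energy\<close>

definition ln_sq_primitive :: "real \<Rightarrow> real \<Rightarrow> real" where
  "ln_sq_primitive a t = t * ln (t\<^sup>2 + a\<^sup>2) - 2 * t + 2 * a * arctan (t / a)"

lemma ln_sq_primitive_deriv: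
  assumes a: "a > 0"
  shows "(ln_sq_primitive a has_real_derivative ln (t\<^sup>2 + a\<^sup>2)) (at t)"
proof -
  have pos: "t\<^sup>2 + a\<^sup>2 > 0"
    using a by (simp add: add_nonneg_pos)
  have a_nonzero: "a \<noteq> 0"
    using a by simp
  have inv: "inverse (1 + (t / a)\<^sup>2) = a\<^sup>2 / (t\<^sup>2 + a\<^sup>2)"
    using a pos by (simp add: field_simps)
  show ?thesis
    unfolding ln_sq_primitive_def[abs_def]
    apply (rule derivative_eq_intros refl pos a_nonzero)+
    apply (simp add: inv)
    using pos a apply (simp add: field_simps power2_eq_square)
    done
qed

lemma DERIV_ln_sq_primitive [derivative_intros]:
  assumes "a > 0" and "(f has_real_derivative f') (at x within s)"
  shows "((\<lambda>x. ln_sq_primitive a (f x)) has_real_derivative ln ((f x)\<^sup>2 + a\<^sup>2) * f') (at x within s)"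
  using DERIV_chain2[OF ln_sq_primitive_deriv[OF assms(1)] assms(2)] .

lemma ln_sq_primitive_minus: "ln_sq_primitive a (- t) = - ln_sq_primitive a t"
  by (simp add: ln_sq_primitive_def arctan_minus)

text \<open>On \<open>x > 0\<close>, a primitive of \<open>ln \<bar>x\<^sup>2 + z\<^sup>2\<bar> - 2 ln x\<close> rising from \<open>0\<close> at \<open>0\<close> to \<open>\<pi> \<bar>Re z\<bar>\<close> at \<open>\<infinity>\<close>.
  The branch \<open>Re z = 0\<close> is only a primitive for \<open>z = 0\<close>; nonzero purely imaginary eigenvalues
  are excluded separately.\<close>

definition coulson_primitive :: "complex \<Rightarrow> real \<Rightarrow> real" where
  "coulson_primitive z x = (if Re z = 0 then 0 else
     (ln_sq_primitive (abs (Re z)) (x - Im z) + ln_sq_primitive (abs (Re z)) (x + Im z)) / 2 - 2 * (x * ln x - x))"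

lemma ln_norm_of_real_sq_add_sq:
  assumes "Re z \<noteq> 0"
  shows "ln (cmod (of_real x ^ 2 + z ^ 2)) =
    (ln ((x - Im z)\<^sup>2 + (Re z)\<^sup>2) + ln ((x + Im z)\<^sup>2 + (Re z)\<^sup>2)) / 2"
proof -
  have pos: "(x - Im z)\<^sup>2 + (Re z)\<^sup>2 > 0" "(x + Im z)\<^sup>2 + (Re z)\<^sup>2 > 0"
    using assms by (simp_all add: add_nonneg_pos)
  have "(cmod (of_real x ^ 2 + z ^ 2))\<^sup>2 = ((x - Im z)\<^sup>2 + (Re z)\<^sup>2) * ((x + Im z)\<^sup>2 + (Re z)\<^sup>2)"
    unfolding cmod_power2 by (simp add: power2_eq_square algebra_simps)
  then have "cmod (of_real x ^ 2 + z ^ 2) = sqrt (((x - Im z)\<^sup>2 + (Re z)\<^sup>2) * ((x + Im z)\<^sup>2 + (Re z)\<^sup>2))"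
    by (metis norm_ge_zero real_sqrt_unique)
  also have "\<dots> = sqrt ((x - Im z)\<^sup>2 + (Re z)\<^sup>2) * sqrt ((x + Im z)\<^sup>2 + (Re z)\<^sup>2)"
    by (rule real_sqrt_mult)
  finally show ?thesis
    using pos by (simp add: ln_mult_pos ln_sqrt add_divide_distrib)
qed

lemma coulson_primitive_deriv:
  assumes x: "x > 0" and z: "Re z \<noteq> 0 \<or> z = 0"
  shows "(coulson_primitive z has_real_derivative ln (cmod (of_real x ^ 2 + z ^ 2)) - 2 * ln x) (at x)"
proof (cases "Re z = 0")
  case True
  then have "z = 0"
    using z by simp
  moreover have "ln (x ^ 2) = 2 * ln x"
    using x by (simp add: ln_realpow)
  ultimately show ?thesis
    using True by (simp add: coulson_primitive_def[abs_def] norm_power)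
next
  case False
  then have a: "\<bar>Re z\<bar> > 0"
    by simp
  have "((\<lambda>x. (ln_sq_primitive (abs (Re z)) (x - Im z) + ln_sq_primitive (abs (Re z)) (x + Im z)) / 2
      - 2 * (x * ln x - x)) has_real_derivative
      (ln ((x - Im z)\<^sup>2 + (Re z)\<^sup>2) + ln ((x + Im z)\<^sup>2 + (Re z)\<^sup>2)) / 2 - 2 * ln x) (at x)"
    using a x by (auto intro!: derivative_eq_intros)
  then show ?thesis
    unfolding coulson_primitive_def[abs_def] ln_norm_of_real_sq_add_sq[OF False] using False by simp
qed

lemma coulson_primitive_at_right_0: "(coulson_primitive z \<longlongrightarrow> 0) (at_right 0)"
proof (cases "Re z = 0")
  case False
  then have a: "\<bar>Re z\<bar> > 0"
    by simp
  have cont: "isCont (ln_sq_primitive (abs (Re z))) t" for t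
    by (rule DERIV_isCont[OF ln_sq_primitive_deriv[OF a]])
  have "((\<lambda>x. (ln_sq_primitive (abs (Re z)) (x - Im z) + ln_sq_primitive (abs (Re z)) (x + Im z)) / 2
      - 2 * (x * ln x - x)) \<longlongrightarrow>
      (ln_sq_primitive (abs (Re z)) (0 - Im z) + ln_sq_primitive (abs (Re z)) (0 + Im z)) / 2 - 2 * 0) (at_right 0)"
    by (intro tendsto_intros isCont_tendsto_compose[OF cont]) (simp | real_asymp)+
  then show ?thesis
    using False by (simp add: coulson_primitive_def[abs_def] ln_sq_primitive_minus)
qed (simp add: coulson_primitive_def[abs_def])

lemma coulson_primitive_at_top: "(coulson_primitive z \<longlongrightarrow> pi * \<bar>Re z\<bar>) at_top"
proof (cases "Re z = 0")
  case False
  then have a: "\<bar>Re z\<bar> > 0"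
    by simp
  have "((\<lambda>x. (ln_sq_primitive (abs (Re z)) (x - Im z) + ln_sq_primitive (abs (Re z)) (x + Im z)) / 2
      - 2 * (x * ln x - x)) \<longlongrightarrow> pi * \<bar>Re z\<bar>) at_top"
    using a unfolding ln_sq_primitive_def by real_asymp
  then show ?thesis
    using False by (simp add: coulson_primitive_def[abs_def])
qed (simp add: coulson_primitive_def[abs_def])

lemma roots_off_imaginary_axis:
  fixes e :: "nat \<Rightarrow> complex" and S :: "real \<Rightarrow> real"
  assumes char: "\<And>x. (\<Prod>i<n. \<i> * of_real x - e i) = \<i> ^ n * of_real (S x)"
    and nonzero: "\<And>x. x \<noteq> 0 \<Longrightarrow> S x \<noteq> 0" and "i < n"
  shows "Re (e i) \<noteq> 0 \<or> e i = 0"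
proof (rule ccontr)
  assume "\<not> (Re (e i) \<noteq> 0 \<or> e i = 0)"
  then have "Im (e i) \<noteq> 0" and "\<i> * of_real (Im (e i)) - e i = 0"
    by (auto simp: complex_eq_iff)
  moreover have "(\<Prod>j<n. \<i> * of_real (Im (e i)) - e j) = 0"
    using \<open>i < n\<close> calculation(2) by (intro prod_zero) auto
  then have "S (Im (e i)) = 0"
    unfolding char by simp
  ultimately show False
    using nonzero by blast
qed

lemma prod_norm_sq_add_sq:
  fixes e :: "nat \<Rightarrow> complex" and S :: "real \<Rightarrow> real"
  assumes char: "\<And>x. (\<Prod>i<n. \<i> * of_real x - e i) = \<i> ^ n * of_real (S x)"
    and parity: "\<And>x. S (- x) = (-1) ^ n * S x"
  shows "(\<Prod>i<n. cmod (of_real x ^ 2 + e i ^ 2)) = (S x)\<^sup>2"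
proof -
  have "of_real x ^ 2 + e i ^ 2 = (\<i> * of_real x - e i) * (\<i> * of_real (- x) - e i)" for i
    by (simp add: algebra_simps power2_eq_square)
  then have "(\<Prod>i<n. of_real x ^ 2 + e i ^ 2) =
      (\<Prod>i<n. \<i> * of_real x - e i) * (\<Prod>i<n. \<i> * of_real (- x) - e i)"
    by (simp only: prod.distrib)
  also have "\<dots> = (\<i> ^ n * of_real (S x)) * (\<i> ^ n * of_real ((-1) ^ n * S x))"
    unfolding char parity ..
  finally have "cmod (\<Prod>i<n. of_real x ^ 2 + e i ^ 2) = (S x)\<^sup>2"
    by (simp add: norm_mult norm_power power2_eq_square)
  then show ?thesis
    by (simp add: prod_norm)
qed

lemma coulson_sum_deriv:
  fixes e :: "nat \<Rightarrow> complex" and S :: "real \<Rightarrow> real"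
  assumes char: "\<And>x. (\<Prod>i<n. \<i> * of_real x - e i) = \<i> ^ n * of_real (S x)"
    and parity: "\<And>x. S (- x) = (-1) ^ n * S x"
    and pos: "\<And>x. x > 0 \<Longrightarrow> S x > 0" and x: "x > 0"
  shows "((\<lambda>x. \<Sum>i<n. coulson_primitive (e i) x) has_real_derivative
    2 * ln (S x) - 2 * real n * ln x) (at x)"
proof -
  have nonzero: "S t \<noteq> 0" if "t \<noteq> 0" for t
  proof (cases "t > 0")
    case False
    then have "S (- t) > 0"
      using pos that by simp
    then show ?thesis
      using parity[of t] by auto
  qed (use pos in fastforce)
  have "((\<lambda>x. \<Sum>i<n. coulson_primitive (e i) x) has_real_derivative
      (\<Sum>i<n. ln (cmod (of_real x ^ 2 + e i ^ 2)) - 2 * ln x)) (at x)"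
    by (intro DERIV_sum coulson_primitive_deriv x roots_off_imaginary_axis[OF char nonzero]) auto
  moreover have "(\<Sum>i<n. ln (cmod (of_real x ^ 2 + e i ^ 2)) - 2 * ln x) = 2 * ln (S x) - 2 * real n * ln x"
  proof -
    have "(\<Prod>i<n. cmod (of_real x ^ 2 + e i ^ 2)) \<noteq> 0"
      unfolding prod_norm_sq_add_sq[where e = e and S = S, OF char parity] using pos[OF x] by simp
    then have "(\<Sum>i<n. ln (cmod (of_real x ^ 2 + e i ^ 2))) = ln (\<Prod>i<n. cmod (of_real x ^ 2 + e i ^ 2))"
      by (subst ln_prod) auto
    also have "\<dots> = 2 * ln (S x)"
      unfolding prod_norm_sq_add_sq[where e = e and S = S, OF char parity] using pos[OF x] by (simp add: ln_realpow)
    finally show ?thesis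
      by (simp add: sum_subtractf)
  qed
  ultimately show ?thesis
    by simp
qed

lemma lim_at_top_pos_of_deriv_pos:
  fixes D :: "real \<Rightarrow> real"
  assumes deriv: "\<And>x. x > 0 \<Longrightarrow> (D has_real_derivative D' x) (at x)"
    and deriv_pos: "\<And>x. x > 0 \<Longrightarrow> D' x > 0"
    and at_0: "(D \<longlongrightarrow> 0) (at_right 0)" and at_top: "(D \<longlongrightarrow> L) at_top"
  shows "L > 0"
proof -
  have increasing: "D a < D b" if "0 < a" "a < b" for a b
    by (rule DERIV_pos_imp_increasing[OF that(2)]) (metis deriv deriv_pos less_le_trans that(1))
  have "0 \<le> D 1"
    using at_0 by (rule tendsto_upperbound)
      (auto simp: eventually_at_right_field intro!: exI[of _ 1] less_imp_le increasing)
  also have "D 1 < D 2"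
    by (rule increasing) simp_all
  also have "D 2 \<le> L"
    using at_top by (rule tendsto_lowerbound)
      (auto simp: eventually_at_top_linorder intro!: exI[of _ 3] less_imp_le increasing)
  finally show ?thesis .
qed

lemma sum_abs_Re_less:
  fixes e f :: "nat \<Rightarrow> complex" and S T :: "real \<Rightarrow> real"
  assumes char_e: "\<And>x. (\<Prod>i<n. \<i> * of_real x - e i) = \<i> ^ n * of_real (S x)"
    and parity_S: "\<And>x. S (- x) = (-1) ^ n * S x"
    and char_f: "\<And>x. (\<Prod>i<n. \<i> * of_real x - f i) = \<i> ^ n * of_real (T x)"
    and parity_T: "\<And>x. T (- x) = (-1) ^ n * T x"
    and pos: "\<And>x. x > 0 \<Longrightarrow> 0 < T x" and less: "\<And>x. x > 0 \<Longrightarrow> T x < S x"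
  shows "(\<Sum>i<n. \<bar>Re (f i)\<bar>) < (\<Sum>i<n. \<bar>Re (e i)\<bar>)"
proof -
  have S_pos: "x > 0 \<Longrightarrow> 0 < S x" for x
    using pos less by (meson less_trans)
  define D where "D x = (\<Sum>i<n. coulson_primitive (e i) x) - (\<Sum>i<n. coulson_primitive (f i) x)" for x
  have "pi * (\<Sum>i<n. \<bar>Re (e i)\<bar>) - pi * (\<Sum>i<n. \<bar>Re (f i)\<bar>) > 0"
  proof (rule lim_at_top_pos_of_deriv_pos)
    show "(D has_real_derivative (2 * ln (S x) - 2 * real n * ln x) - (2 * ln (T x) - 2 * real n * ln x))
        (at x)" if "x > 0" for x
      unfolding D_def[abs_def]
      using coulson_sum_deriv[where e = e and S = S, OF char_e parity_S S_pos that]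
        coulson_sum_deriv[where e = f and S = T, OF char_f parity_T pos that]
      by (rule DERIV_diff)
    show "(2 * ln (S x) - 2 * real n * ln x) - (2 * ln (T x) - 2 * real n * ln x) > 0" if "x > 0" for x
      using less[OF that] pos[OF that] by simp
    show "(D \<longlongrightarrow> 0) (at_right 0)"
      unfolding D_def[abs_def] using tendsto_diff[OF tendsto_sum tendsto_sum, OF coulson_primitive_at_right_0
        coulson_primitive_at_right_0] by simp
    show "(D \<longlongrightarrow> pi * (\<Sum>i<n. \<bar>Re (e i)\<bar>) - pi * (\<Sum>i<n. \<bar>Re (f i)\<bar>)) at_top"
      unfolding D_def[abs_def] sum_distrib_left
      by (intro tendsto_diff tendsto_sum coulson_primitive_at_top)
  qed
  then show ?thesis
    by simp
qed

lemma energy_eq_sum_abs_Re_roots: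
  assumes "A \<in> carrier_mat n n"
  obtains e :: "nat \<Rightarrow> complex" where "energy A = (\<Sum>i<n. \<bar>Re (e i)\<bar>)"
    and "\<And>y. poly (char_poly (map_mat complex_of_int A)) y = (\<Prod>i<n. y - e i)"
proof -
  obtain as where as: "char_poly (map_mat complex_of_int A) = (\<Prod>a\<leftarrow>as. [:- a, 1:])" "length as = n"
    using char_poly_factorized[of "map_mat complex_of_int A" n] assms by auto
  have "proots (\<Prod>a\<leftarrow>as. [:- a, 1:]) = mset as" for as :: "complex list"
  proof (induction as)
    case (Cons a as)
    have "(\<Prod>a\<leftarrow>as. [:- a, 1:]) \<noteq> 0"
      by (auto simp: prod_list_zero_iff)
    then have "proots ([:- a, 1:] * (\<Prod>a\<leftarrow>as. [:- a, 1:])) = {#a#} + mset as"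
      using Cons.IH by (subst proots_mult) simp_all
    then show ?case
      by simp
  qed simp
  then have "eigenvalues_ms A = mset as"
    unfolding eigenvalues_ms_def as(1) .
  moreover have "(\<Sum>z\<in>#mset as. \<bar>Re z\<bar>) = (\<Sum>a\<leftarrow>as. \<bar>Re a\<bar>)"
    by (induction as) simp_all
  ultimately have "energy A = (\<Sum>i<n. \<bar>Re (as ! i)\<bar>)"
    unfolding energy_def using as(2) by (simp add: sum.list_conv_set_nth atLeast0LessThan)
  moreover have "poly (char_poly (map_mat complex_of_int A)) y = (\<Prod>i<n. y - as ! i)" for y
    unfolding as(1) using as(2)
    by (simp add: poly_prod prod.list_conv_set_nth atLeast0LessThan)
  ultimately show ?thesis
    using that by blast
qed

lemma Delta1_energy_imaginary_axis:
  assumes "A \<in> Delta1 n"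
  obtains e :: "nat \<Rightarrow> complex" where "energy A = (\<Sum>i<n. \<bar>Re (e i)\<bar>)"
    and "\<And>x. (\<Prod>i<n. \<i> * of_real x - e i) = \<i> ^ n * of_real (linear_subdigraph_poly A n x)"
proof -
  have "A \<in> carrier_mat n n"
    using assms by (simp add: Delta1_def sidigraph_def)
  then obtain e where e: "energy A = (\<Sum>i<n. \<bar>Re (e i)\<bar>)"
    "\<And>y. poly (char_poly (map_mat complex_of_int A)) y = (\<Prod>i<n. y - e i)"
    using energy_eq_sum_abs_Re_roots by blast
  show ?thesis
  proof (rule that[OF e(1)])
    show "(\<Prod>i<n. \<i> * of_real x - e i) = \<i> ^ n * of_real (linear_subdigraph_poly A n x)" for x
      by (subst e(2)[symmetric]) (rule Delta1_char_poly_imaginary[OF assms])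
  qed
qed

theorem theorem3p5:
  fixes n :: nat and A :: "int mat" and u v :: nat
  assumes "A \<in> Delta1 n"
    and "u < n" and "v < n"
    and "arc A u v" and "arc A v u"
  shows "energy (delete_arc A u v) < energy A"
proof -
  have A_n: "A \<in> carrier_mat n n" and "A $$ (u, u) = 0"
    using assms(1,2) by (simp_all add: Delta1_def sidigraph_def)
  then have arcs: "A $$ (u, v) \<noteq> 0" "A $$ (v, u) \<noteq> 0" and "u \<noteq> v"
    using assms(4,5) by (auto simp: arc_def)
  have B: "delete_arc A u v \<in> Delta1 n"
    using assms(1) by (rule delete_arc_Delta1)
  obtain e where e: "energy A = (\<Sum>i<n. \<bar>Re (e i)\<bar>)"
    "\<And>x. (\<Prod>i<n. \<i> * of_real x - e i) = \<i> ^ n * of_real (linear_subdigraph_poly A n x)"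
    using Delta1_energy_imaginary_axis[OF assms(1)] by blast
  obtain f where f: "energy (delete_arc A u v) = (\<Sum>i<n. \<bar>Re (f i)\<bar>)"
    "\<And>x. (\<Prod>i<n. \<i> * of_real x - f i) =
      \<i> ^ n * of_real (linear_subdigraph_poly (delete_arc A u v) n x)"
    using Delta1_energy_imaginary_axis[OF B] by blast
  show ?thesis
    unfolding e(1) f(1)
    by (rule sum_abs_Re_less[OF e(2) linear_subdigraph_poly_minus[OF assms(1)]
      f(2) linear_subdigraph_poly_minus[OF B] linear_subdigraph_poly_pos
      linear_subdigraph_poly_delete_arc_less[OF A_n assms(2,3) \<open>u \<noteq> v\<close> arcs]])
qed

end
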